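(* Let $y_0\approx1.35542$ be the second smallest real root of the polynomial $2y^3-9y^2+10y-2$ (its unique root in the interval $(1,2)$). Algorithm SIDLE with parameter $y=y_0$ is $\rho$-competitive for $1\mid t_j=1\mid\sum C_j$ with obligatory tests, regardless of the order in which it tests the jobs, where \[ \rho=\tfrac12\left(1-y_0+y_0^2+\sqrt{9-2y_0-y_0^2-2y_0^3+y_0^4}\right)\approx1.58451\le1.585. \]
   Context: Scheduling with obligatory tests and uniform test times: $n$ jobs on a single machine, each with test time $t_j=1$ and an unknown processing time $p_j\ge0$ revealed only when the test of $j$ completes. The test of a job must be executed before its processing part (which can be executed any time afterwards); operations are non-preemptive, one at a time. $C_j$ is the completion time of the processing part of $j$; objective $\sum_jC_j$. An algorithm is $\rho$-competitive if $\mathit{ALG}\le\rho\cdot\mathit{OPT}$ on every instance, where $\mathit{OPT}$ is the offline optimum (tests also obligatory). Algorithm SIDLE with parameter $y>0$: test the jobs one after another without idle time (in some order). When the test of job $j$ completes and reveals $p_j\le y$ (a short job), execute the processing part of $j$ immediately after its test, before the next test. If $p_j>y$ (a long job), defer its processing part. After all jobs have been tested and all short jobs executed, execute the processing parts of the long jobs in non-decreasing order of $p_j$. *)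

theory Defs
  imports Complex_Main
begin

(* Instance: jobs 0..<n, each with test time 1 and processing time p j >= 0.
   A (non-preemptive, single-machine) schedule assigns to every job j a start time
   st j of its test (length 1) and a start time sp j of its processing part (length p j). *)
definition feasible_schedule ::
  "nat \<Rightarrow> (nat \<Rightarrow> real) \<Rightarrow> (nat \<Rightarrow> real) \<Rightarrow> (nat \<Rightarrow> real) \<Rightarrow> bool" where
  "feasible_schedule n p st sp \<longleftrightarrow>
     (\<forall>j<n. 0 \<le> st j \<and> st j + 1 \<le> sp j) \<and>
     (\<forall>i<n. \<forall>j<n. i \<noteq> j \<longrightarrow> st i + 1 \<le> st j \<or> st j + 1 \<le> st i) \<and>
     (\<forall>i<n. \<forall>j<n. i \<noteq> j \<longrightarrow> sp i + p i \<le> sp j \<or> sp j + p j \<le> sp i) \<and>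
     (\<forall>i<n. \<forall>j<n. st i + 1 \<le> sp j \<or> sp j + p j \<le> st i)"

definition sched_cost :: "nat \<Rightarrow> (nat \<Rightarrow> real) \<Rightarrow> (nat \<Rightarrow> real) \<Rightarrow> real" where
  "sched_cost n p sp = (\<Sum>j<n. sp j + p j)"

definition OPT :: "nat \<Rightarrow> (nat \<Rightarrow> real) \<Rightarrow> real" where
  "OPT n p = Inf {sched_cost n p sp | st sp. feasible_schedule n p st sp}"

(* Algorithm SIDLE with threshold y.
   pos j  = position (0-based) of job j in the testing order (a bijection on {..<n});
   rk j   = rank used to order the deferred long jobs; it must list the long jobs in
            non-decreasing order of p (any tie-breaking is allowed).
   Tests are run back to back; a short job (p j <= y) is processed right after its test.
   After all tests and short jobs (time n + sum of short p), long jobs are processed in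
   the order rk. *)
definition sidle_C ::
  "real \<Rightarrow> nat \<Rightarrow> (nat \<Rightarrow> real) \<Rightarrow> (nat \<Rightarrow> nat) \<Rightarrow> (nat \<Rightarrow> nat) \<Rightarrow> nat \<Rightarrow> real" where
  "sidle_C y n p pos rk j =
     (if p j \<le> y then
        real (pos j) + 1 + (\<Sum>i\<in>{i. i < n \<and> p i \<le> y \<and> pos i \<le> pos j}. p i)
      else
        real n + (\<Sum>i\<in>{i. i < n \<and> p i \<le> y}. p i)
          + (\<Sum>i\<in>{i. i < n \<and> y < p i \<and> rk i \<le> rk j}. p i))"

definition sidle_cost ::
  "real \<Rightarrow> nat \<Rightarrow> (nat \<Rightarrow> real) \<Rightarrow> (nat \<Rightarrow> nat) \<Rightarrow> (nat \<Rightarrow> nat) \<Rightarrow> real" where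
  "sidle_cost y n p pos rk = (\<Sum>j<n. sidle_C y n p pos rk j)"

definition long_order_ok :: "real \<Rightarrow> nat \<Rightarrow> (nat \<Rightarrow> real) \<Rightarrow> (nat \<Rightarrow> nat) \<Rightarrow> bool" where
  "long_order_ok y n p rk \<longleftrightarrow> bij_betw rk {..<n} {..<n} \<and>
     (\<forall>i<n. \<forall>j<n. y < p i \<and> y < p j \<and> rk i < rk j \<longrightarrow> p i \<le> p j)"

end

theory Submission
  imports Defs
begin

(*
  In any feasible schedule a job completes no earlier than the total length (tests and
  processing parts) of the jobs finishing before it, so OPT is at least
  sum_j (1 + p_j) + sum over unordered pairs of (1 + min p_i p_j).  Under SIDLE every ordered
  pair of jobs causes a delay, and for each pair the two delays exceed (1 + d) times the
  pair's share of this bound by at most a bilinear expression in the coordinates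
  (short?, processing time if short, long?) of the two jobs, where d = rho - 1.  Summed over
  all pairs these expressions form a quadratic form in the totals of the coordinates, which
  is positive semidefinite exactly because d is the positive root of
  d^2 + (1 + y - y^2) d + y - 2; the diagonal terms are absorbed by d * sum_j (1 + p_j).
  The cubic defining y0 only enters through the bounds 1.355 < y0 < 1.3555, which are what
  the final estimates need.
*)

lemma sum_Collect_lessThan:
  "sum f {i. i < (n::nat) \<and> P i} = (\<Sum>i<n. if P i then f i else 0)"
  by (simp add: sum.inter_filter[symmetric] Collect_conj_eq lessThan_def)

lemma sum_remove_if_neq:
  fixes f :: "'a \<Rightarrow> 'b::comm_monoid_add"
  assumes "finite A" "j \<in> A"
  shows "sum f A = f j + (\<Sum>i\<in>A. if i \<noteq> j then f i else 0)"
proof -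
  have "{i \<in> A. i \<noteq> j} = A - {j}" by blast
  then show ?thesis using sum.remove[OF assms, of f] sum.inter_filter[OF assms(1), of f "\<lambda>i. i \<noteq> j"]
    by simp
qed

lemma sum_offdiag_symmetrize:
  fixes g :: "'a \<Rightarrow> 'a \<Rightarrow> real"
  shows "2 * (\<Sum>j\<in>I. \<Sum>i\<in>I. if i \<noteq> j then g i j else 0)
       = (\<Sum>j\<in>I. \<Sum>i\<in>I. if i \<noteq> j then g i j + g j i else 0)"
proof -
  have "(\<Sum>j\<in>I. \<Sum>i\<in>I. if i \<noteq> j then g j i else 0) = (\<Sum>j\<in>I. \<Sum>i\<in>I. if i \<noteq> j then g i j else 0)"
    by (subst sum.swap) (simp add: eq_commute)
  moreover have "(if i \<noteq> j then g i j + g j i else 0) = (if i \<noteq> j then g i j else 0) + (if i \<noteq> j then g j i else 0)"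
    for i j by simp
  ultimately show ?thesis by (simp add: sum.distrib)
qed

section \<open>A lower bound on the optimum\<close>

lemma sum_le_of_disjoint_intervals:
  fixes s l :: "'a \<Rightarrow> real"
  assumes "finite A" and "0 \<le> T"
    and inside: "\<And>a. a \<in> A \<Longrightarrow> 0 \<le> s a \<and> 0 \<le> l a \<and> s a + l a \<le> T"
    and disjoint: "\<And>a b. a \<in> A \<Longrightarrow> b \<in> A \<Longrightarrow> a \<noteq> b \<Longrightarrow> s a + l a \<le> s b \<or> s b + l b \<le> s a"
  shows "sum l A \<le> T"
  using assms
proof (induction A arbitrary: T rule: finite_ranking_induct[where f = s])
  case empty
  then show ?case by simp
next
  case (insert x A)
  have IH: "sum l A \<le> T'" if "0 \<le> T'" and "\<And>a. a \<in> A \<Longrightarrow> s a + l a \<le> T'" for T'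
    using insert.IH[of T'] insert.prems that by auto
  have sum_insert: "sum l (insert x A) \<le> l x + sum l A"
    using insert.hyps(1) insert.prems(2)[of x] by (cases "x \<in> A") (simp_all add: insert_absorb)
  show ?case
  proof (cases "x \<in> A \<or> l x = 0")
    case True
    then show ?thesis using IH[of T] insert.prems sum_insert by (auto simp: insert_absorb)
  next
    case False
    \<comment> \<open>x starts last, so a positive-length x forces every other interval to end before s x\<close>
    have "s a + l a \<le> s x" if "a \<in> A" for a
      using insert.prems(3)[of a x] insert.prems(2)[of x] insert.hyps(2)[OF that] that False
      by fastforce
    then have "sum l A \<le> s x" using IH insert.prems(2)[of x] by simp
    then show ?thesis using sum_insert insert.prems(2)[of x] by simp
  qed
qed

lemma feasible_schedule_sum_le:
  assumes p: "\<forall>j<n. 0 \<le> p j" and F: "feasible_schedule n p st sp"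
    and B: "B \<subseteq> {..<n}" and T: "0 \<le> T" "\<And>i. i \<in> B \<Longrightarrow> sp i + p i \<le> T"
  shows "(\<Sum>i\<in>B. 1 + p i) \<le> T"
proof -
  \<comment> \<open>operation (i, True) is the test of job i, (i, False) its processing part\<close>
  define s where "s = (\<lambda>(i, test). if test then st i else sp i)"
  define l where "l = (\<lambda>(i, test). if test then 1 else p i)"
  have fin: "finite (B \<times> (UNIV :: bool set))"
    using B by (simp add: finite_subset)
  have test: "\<forall>j<n. 0 \<le> st j \<and> st j + 1 \<le> sp j"
    and tests: "\<forall>i<n. \<forall>j<n. i \<noteq> j \<longrightarrow> st i + 1 \<le> st j \<or> st j + 1 \<le> st i"
    and procs: "\<forall>i<n. \<forall>j<n. i \<noteq> j \<longrightarrow> sp i + p i \<le> sp j \<or> sp j + p j \<le> sp i"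
    and mixed: "\<forall>i<n. \<forall>j<n. st i + 1 \<le> sp j \<or> sp j + p j \<le> st i"
    using F unfolding feasible_schedule_def by blast+
  have "sum l (B \<times> UNIV) \<le> T"
  proof (rule sum_le_of_disjoint_intervals[OF fin T(1)])
    fix a assume "a \<in> B \<times> (UNIV :: bool set)"
    then obtain i test where a: "a = (i, test)" "i \<in> B" by blast
    then have "i < n" "sp i + p i \<le> T" using B T(2) by auto
    then show "0 \<le> s a \<and> 0 \<le> l a \<and> s a + l a \<le> T"
      using test p unfolding a s_def l_def by (cases test) force+
  next
    fix a b assume "a \<in> B \<times> (UNIV :: bool set)" "b \<in> B \<times> (UNIV :: bool set)" "a \<noteq> b"
    then obtain i t j u where ab: "a = (i, t)" "b = (j, u)" "i < n" "j < n" "(i, t) \<noteq> (j, u)"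
      using B by blast
    show "s a + l a \<le> s b \<or> s b + l b \<le> s a"
    proof (cases t; cases u)
      assume "t" "u" then show ?thesis using tests ab unfolding s_def l_def by auto
    next
      assume "\<not> t" "\<not> u" then show ?thesis using procs ab unfolding s_def l_def by auto
    next
      assume "t" "\<not> u" then show ?thesis using mixed ab unfolding s_def l_def by auto
    next
      assume "\<not> t" "u" then show ?thesis using mixed ab unfolding s_def l_def by auto
    qed
  qed
  moreover have "sum l (B \<times> UNIV) = (\<Sum>i\<in>B. 1 + p i)"
    by (simp add: sum.cartesian_product[symmetric] UNIV_bool l_def add.commute)
  ultimately show ?thesis by simp
qed

definition pair_lower_bound :: "nat \<Rightarrow> (nat \<Rightarrow> real) \<Rightarrow> real" where
  "pair_lower_bound n p = (\<Sum>j<n. 1 + p j)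
     + (\<Sum>j<n. \<Sum>i<n. if i \<noteq> j then 1 + min (p i) (p j) else 0) / 2"

lemma pair_lower_bound_le_sched_cost:
  assumes p: "\<forall>j<n. 0 \<le> p j" and F: "feasible_schedule n p st sp"
  shows "pair_lower_bound n p \<le> sched_cost n p sp"
proof -
  define C where "C i = sp i + p i" for i
  define before where "before i j \<longleftrightarrow> C i < C j \<or> (C i = C j \<and> i \<le> j)" for i j
  define b where "b i j = (if before i j then 1 + p i else 0)" for i j
  have "(\<Sum>i<n. b i j) \<le> C j" if "j < n" for j
  proof -
    have "0 \<le> C j" using F p that unfolding feasible_schedule_def C_def by force
    then have "(\<Sum>i\<in>{i. i < n \<and> before i j}. 1 + p i) \<le> C j"
      by (intro feasible_schedule_sum_le[OF p F]) (auto simp: before_def C_def)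
    then show ?thesis unfolding b_def by (simp add: sum_Collect_lessThan)
  qed
  then have "(\<Sum>j<n. \<Sum>i<n. b i j) \<le> sched_cost n p sp"
    unfolding sched_cost_def C_def by (intro sum_mono) auto
  moreover have "(\<Sum>j<n. \<Sum>i<n. b i j) = (\<Sum>j<n. 1 + p j) + (\<Sum>j<n. \<Sum>i<n. if i \<noteq> j then b i j else 0)"
  proof -
    have "(\<Sum>i<n. b i j) = (1 + p j) + (\<Sum>i<n. if i \<noteq> j then b i j else 0)" if "j < n" for j
      using sum_remove_if_neq[of "{..<n}" j "\<lambda>i. b i j"] that by (simp add: b_def before_def)
    then show ?thesis by (simp add: sum.distrib)
  qed
  moreover have "(\<Sum>j<n. \<Sum>i<n. if i \<noteq> j then 1 + min (p i) (p j) else 0)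
      \<le> 2 * (\<Sum>j<n. \<Sum>i<n. if i \<noteq> j then b i j else 0)"
    unfolding sum_offdiag_symmetrize
    by (intro sum_mono) (auto simp: b_def before_def)
  ultimately show ?thesis unfolding pair_lower_bound_def by linarith
qed

lemma feasible_schedule_exists:
  assumes p: "\<forall>j<n. 0 \<le> p j"
  shows "\<exists>st sp. feasible_schedule n p st sp"
proof -
  define P where "P = (\<Sum>i<n. p i)"
  have p_le: "p i \<le> P" if "i < n" for i
    unfolding P_def using p that by (intro member_le_sum) auto
  have "0 \<le> P" unfolding P_def using p by (intro sum_nonneg) auto
  \<comment> \<open>job j gets the slot [j (1 + P), (j + 1) (1 + P)), test first\<close>
  define st where "st j = real j * (1 + P)" for j
  have gap: "st i + (1 + P) \<le> st j" if "i < j" for i j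
  proof -
    have "(real i + 1) * (1 + P) \<le> real j * (1 + P)"
      using that \<open>0 \<le> P\<close> by (intro mult_right_mono) auto
    then show ?thesis unfolding st_def by (simp add: algebra_simps)
  qed
  have "feasible_schedule n p st (\<lambda>j. st j + 1)"
    unfolding feasible_schedule_def
  proof (intro conjI allI impI)
    fix i j assume ij: "i < n" "j < n"
    show "0 \<le> st j" unfolding st_def using \<open>0 \<le> P\<close> by simp
    show "st j + 1 \<le> st j + 1" by simp
    show "st i + 1 \<le> st j + 1 \<or> st j + 1 + p j \<le> st i"
      using gap[of j i] p_le[OF ij(2)] ij p by (cases "j < i") (auto simp: st_def)
    assume "i \<noteq> j"
    then show "st i + 1 \<le> st j \<or> st j + 1 \<le> st i"
      and "st i + 1 + p i \<le> st j + 1 \<or> st j + 1 + p j \<le> st i + 1"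
      using gap[of i j] gap[of j i] p_le[OF ij(1)] p_le[OF ij(2)] \<open>0 \<le> P\<close>
      by (cases "i < j"; simp add: not_less_iff_gr_or_eq)+
  qed
  then show ?thesis by blast
qed

lemma pair_lower_bound_le_OPT:
  assumes p: "\<forall>j<n. 0 \<le> p j"
  shows "pair_lower_bound n p \<le> OPT n p"
  unfolding OPT_def
proof (rule cInf_greatest)
  show "{sched_cost n p sp |st sp. feasible_schedule n p st sp} \<noteq> {}"
    using feasible_schedule_exists[OF p] by blast
  show "pair_lower_bound n p \<le> c" if "c \<in> {sched_cost n p sp |st sp. feasible_schedule n p st sp}" for c
    using that pair_lower_bound_le_sched_cost[OF p] by blast
qed

section \<open>The charging form\<close>

\<comment> \<open>A job has coordinates (k, s, l) = (1, p, 0) if it is short and (0, 0, 1) if it is long.\<close>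
definition charge_form :: "real \<Rightarrow> real \<Rightarrow> real \<Rightarrow> real \<Rightarrow> real \<Rightarrow> real \<Rightarrow> real \<Rightarrow> real \<Rightarrow> real" where
  "charge_form y d k s l k' s' l' =
     k * (d * k' - s' + (d - 1) * l') + s * (- k' + (2 + d) / y * s' + d * l')
     + l * ((d - 1) * k' + d * s' + (d * (1 + y) - 1) * l')"

lemma charge_form_commute:
  "charge_form y d k s l k' s' l' = charge_form y d k' s' l' k s l"
  unfolding charge_form_def by (simp add: algebra_simps)

lemma charge_form_sum_left:
  "(\<Sum>i\<in>I. charge_form y d (k i) (s i) (l i) k' s' l')
     = charge_form y d (sum k I) (sum s I) (sum l I) k' s' l'"
  unfolding charge_form_def by (simp add: sum.distrib sum_distrib_right)

lemma charge_form_sum: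
  "(\<Sum>j\<in>I. \<Sum>i\<in>I. charge_form y d (k i) (s i) (l i) (k j) (s j) (l j))
     = charge_form y d (sum k I) (sum s I) (sum l I) (sum k I) (sum s I) (sum l I)"
proof -
  have "(\<Sum>j\<in>I. \<Sum>i\<in>I. charge_form y d (k i) (s i) (l i) (k j) (s j) (l j))
      = (\<Sum>j\<in>I. charge_form y d (sum k I) (sum s I) (sum l I) (k j) (s j) (l j))"
    by (simp only: charge_form_sum_left)
  also have "\<dots> = (\<Sum>j\<in>I. charge_form y d (k j) (s j) (l j) (sum k I) (sum s I) (sum l I))"
    by (rule sum.cong[OF refl], rule charge_form_commute)
  also have "\<dots> = charge_form y d (sum k I) (sum s I) (sum l I) (sum k I) (sum s I) (sum l I)"
    by (rule charge_form_sum_left)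
  finally show ?thesis .
qed

lemma charge_form_nonneg:
  fixes y d K S L :: real
  assumes y: "0 < y" and d: "0 < d" and dy: "y < d * (2 + d)"
    and quad: "d\<^sup>2 + (1 + y - y\<^sup>2) * d + y - 2 = 0"
  shows "0 \<le> charge_form y d K S L K S L"
proof -
  define c where "c = (2 + d) / y"
  define P where "P = c * d - 1"
  define Q where "Q = (d * (1 + y) - 1) * d - (d - 1)\<^sup>2"
  define W where "W = d\<^sup>2 + d - 1"
  have cy: "c * y = 2 + d" using y by (simp add: c_def)
  have "y * P = (c * y) * d - y" by (simp add: P_def algebra_simps)
  then have "0 < y * P" unfolding cy using dy by (simp add: algebra_simps)
  then have P: "0 < P" using y by (simp add: zero_less_mult_iff)
  have "y * (P * Q - W\<^sup>2) = (c * y) * d * Q - y * Q - y * W\<^sup>2"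
    by (simp add: P_def algebra_simps)
  also have "\<dots> = d * (d\<^sup>2 + (1 + y - y\<^sup>2) * d + y - 2)"
    unfolding cy Q_def W_def by (simp add: algebra_simps power2_eq_square)
  finally have det: "P * Q - W\<^sup>2 = 0" using quad y by simp
  \<comment> \<open>completing squares; the quadratic equation for d makes the last coefficient vanish\<close>
  have "d * P * charge_form y d K S L K S L
      = P * (d * K - S + (d - 1) * L)\<^sup>2 + (P * S + W * L)\<^sup>2 + (P * Q - W\<^sup>2) * L\<^sup>2"
    unfolding charge_form_def c_def[symmetric] P_def Q_def W_def
    by (simp add: algebra_simps power2_eq_square)
  then have "0 \<le> d * P * charge_form y d K S L K S L" using P det by simp
  then show ?thesis using mult_pos_pos[OF d P] by (simp add: zero_le_mult_iff)
qed

section \<open>Pairwise analysis of SIDLE\<close>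

definition sidle_delay :: "real \<Rightarrow> (nat \<Rightarrow> real) \<Rightarrow> (nat \<Rightarrow> nat) \<Rightarrow> (nat \<Rightarrow> nat) \<Rightarrow> nat \<Rightarrow> nat \<Rightarrow> real" where
  "sidle_delay y p pos rk i j =
     (if p j \<le> y then (if pos i < pos j then 1 + (if p i \<le> y then p i else 0) else 0)
      else 1 + (if p i \<le> y then p i else if rk i < rk j then p i else 0))"

lemma card_less_pos:
  assumes pos: "bij_betw pos {..<n} {..<n}" and j: "j < n"
  shows "real (pos j) = (\<Sum>i<n. if pos i < pos j then 1 else 0)"
proof -
  have "pos ` {i. i < n \<and> pos i < pos j} = {..<pos j}"
  proof
    show "{..<pos j} \<subseteq> pos ` {i. i < n \<and> pos i < pos j}"
    proof
      fix x assume "x \<in> {..<pos j}"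
      moreover have "pos j < n" using pos j by (auto simp: bij_betw_def)
      ultimately have "x \<in> pos ` {..<n}" using pos by (simp add: bij_betw_def)
      then obtain i where "i < n" "x = pos i" by blast
      then show "x \<in> pos ` {i. i < n \<and> pos i < pos j}" using \<open>x \<in> {..<pos j}\<close> by auto
    qed
  qed auto
  moreover have "inj_on pos {i. i < n \<and> pos i < pos j}"
    using pos by (auto simp: bij_betw_def intro: inj_on_subset)
  ultimately have "card {i. i < n \<and> pos i < pos j} = pos j"
    using card_image by fastforce
  then show ?thesis by (simp add: sum_Collect_lessThan[of "\<lambda>_. 1 :: real", symmetric])
qed

lemma sidle_C_eq_sum_delay:
  assumes pos: "bij_betw pos {..<n} {..<n}" and rk: "bij_betw rk {..<n} {..<n}" and j: "j < n"
  shows "sidle_C y n p pos rk j = 1 + p j + (\<Sum>i<n. if i \<noteq> j then sidle_delay y p pos rk i j else 0)"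
proof -
  have pos_inj: "pos i \<noteq> pos j" and rk_inj: "rk i \<noteq> rk j" if "i < n" "i \<noteq> j" for i
    using that j pos rk by (auto simp: bij_betw_def inj_on_def)
  have "sidle_C y n p pos rk j = (\<Sum>i<n. if i = j then 1 + p j else sidle_delay y p pos rk i j)"
  proof (cases "p j \<le> y")
    case True
    have "sidle_C y n p pos rk j = (\<Sum>i<n. (if pos i < pos j then 1 else 0) + (if i = j then 1 else 0)
        + (if p i \<le> y \<and> pos i \<le> pos j then p i else 0))"
      using True j unfolding sidle_C_def card_less_pos[OF pos j]
      by (simp add: sum_Collect_lessThan sum.distrib)
    also have "\<dots> = (\<Sum>i<n. if i = j then 1 + p j else sidle_delay y p pos rk i j)"
      using True pos_inj by (intro sum.cong) (auto simp: sidle_delay_def)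
    finally show ?thesis .
  next
    case False
    have "sidle_C y n p pos rk j = (\<Sum>i<n. 1 + (if p i \<le> y then p i else 0)
        + (if y < p i \<and> rk i \<le> rk j then p i else 0))"
      using False unfolding sidle_C_def by (simp add: sum_Collect_lessThan sum.distrib)
    also have "\<dots> = (\<Sum>i<n. if i = j then 1 + p j else sidle_delay y p pos rk i j)"
      using False rk_inj by (intro sum.cong) (auto simp: sidle_delay_def)
    finally show ?thesis .
  qed
  also have "\<dots> = 1 + p j + (\<Sum>i<n. if i \<noteq> j then sidle_delay y p pos rk i j else 0)"
    using j by (subst sum_remove_if_neq[of _ j]) (auto intro: sum.cong)
  finally show ?thesis .
qed

definition sidle_charge :: "real \<Rightarrow> real \<Rightarrow> (nat \<Rightarrow> real) \<Rightarrow> nat \<Rightarrow> nat \<Rightarrow> real" where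
  "sidle_charge y d p i j = charge_form y d
     (if p i \<le> y then 1 else 0) (if p i \<le> y then p i else 0) (if p i \<le> y then 0 else 1)
     (if p j \<le> y then 1 else 0) (if p j \<le> y then p j else 0) (if p j \<le> y then 0 else 1)"

lemma sidle_charge_cases:
  "sidle_charge y d p i j =
     (if p i \<le> y \<and> p j \<le> y then d - p i - p j + (2 + d) / y * (p i * p j)
      else if p i \<le> y then d - 1 + d * p i
      else if p j \<le> y then d - 1 + d * p j
      else d * (1 + y) - 1)"
  unfolding sidle_charge_def charge_form_def by (simp add: algebra_simps)

lemma prod_le_mult_min:
  fixes a b y :: real
  assumes "0 \<le> a" "a \<le> y" "0 \<le> b" "b \<le> y"
  shows "a * b \<le> y * min a b"
  using assms mult_left_mono[of b y a] mult_right_mono[of a y b] by (simp add: min_def mult.commute)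

lemma sidle_delay_pair_le:
  fixes y d :: real
  assumes y: "0 < y" and d: "0 \<le> d" and p: "0 \<le> p i" "0 \<le> p j"
    and pos: "pos i \<noteq> pos j" and rk: "rk i \<noteq> rk j"
    and long_order: "y < p i \<Longrightarrow> y < p j \<Longrightarrow> rk i < rk j \<Longrightarrow> p i \<le> p j"
                    "y < p i \<Longrightarrow> y < p j \<Longrightarrow> rk j < rk i \<Longrightarrow> p j \<le> p i"
  shows "sidle_delay y p pos rk i j + sidle_delay y p pos rk j i + sidle_charge y d p i j
           \<le> (1 + d) * (1 + min (p i) (p j))"
proof (cases "p i \<le> y"; cases "p j \<le> y")
  assume short: "p i \<le> y" "p j \<le> y"
  have "(2 + d) / y * (p i * p j) \<le> (2 + d) / y * (y * min (p i) (p j))"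
    using prod_le_mult_min[of "p i" y "p j"] short p d y by (intro mult_left_mono) auto
  also have "\<dots> = (2 + d) * min (p i) (p j)" using y by simp
  finally show ?thesis
    using short pos unfolding sidle_delay_def sidle_charge_cases
    by (cases "pos i < pos j") (auto simp: min_def algebra_simps)
next
  assume "\<not> p i \<le> y" "\<not> p j \<le> y"
  moreover have "d * y \<le> d * p i" "d * y \<le> d * p j"
    using calculation d by (auto intro: mult_left_mono)
  ultimately show ?thesis
    using rk long_order unfolding sidle_delay_def sidle_charge_cases
    by (cases "rk i < rk j") (auto simp: min_def algebra_simps)
qed (auto simp: sidle_delay_def sidle_charge_cases min_def algebra_simps)

lemma sidle_charge_diag_le:
  fixes y d :: real
  assumes y: "0 < y" and d: "0 \<le> d" and p: "0 \<le> p j"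
  shows "sidle_charge y d p j j \<le> 2 * d * (1 + p j)"
proof (cases "p j \<le> y")
  case True
  have "(2 + d) / y * (p j * p j) \<le> (2 + d) / y * (y * p j)"
    using True d y p by (intro mult_left_mono mult_right_mono) auto
  also have "\<dots> = 2 * p j + d * p j" using y by (simp add: field_simps)
  finally have "(2 + d) / y * (p j * p j) \<le> 2 * p j + d * p j" .
  moreover have "sidle_charge y d p j j = d - p j - p j + (2 + d) / y * (p j * p j)"
    using True by (simp add: sidle_charge_cases)
  moreover have "2 * d * (1 + p j) = 2 * d + 2 * (d * p j)" by (simp add: algebra_simps)
  ultimately show ?thesis using mult_nonneg_nonneg[OF d p] d by linarith
next
  case False
  then have "d * y \<le> d * p j" using d by (intro mult_left_mono) auto
  moreover have "sidle_charge y d p j j = d + d * y - 1" using False by (simp add: sidle_charge_cases algebra_simps)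
  moreover have "2 * d * (1 + p j) = 2 * d + 2 * (d * p j)" by (simp add: algebra_simps)
  ultimately show ?thesis using mult_nonneg_nonneg[OF d p] d by linarith
qed

lemma sidle_charge_offdiag_sum_ge:
  fixes y d :: real
  assumes y: "0 < y" and d: "0 < d" and dy: "y < d * (2 + d)"
    and quad: "d\<^sup>2 + (1 + y - y\<^sup>2) * d + y - 2 = 0"
    and p: "\<forall>j<n. 0 \<le> p j"
  shows "- 2 * d * (\<Sum>j<n. 1 + p j) \<le> (\<Sum>j<n. \<Sum>i<n. if i \<noteq> j then sidle_charge y d p i j else 0)"
proof -
  have "(\<Sum>j<n. \<Sum>i<n. sidle_charge y d p i j)
      = (\<Sum>j<n. \<Sum>i<n. if i \<noteq> j then sidle_charge y d p i j else 0) + (\<Sum>j<n. sidle_charge y d p j j)"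
    unfolding sum.distrib[symmetric]
    by (intro sum.cong refl) (simp add: sum_remove_if_neq[of "{..<n}" _ "\<lambda>i. sidle_charge y d p i _"])
  moreover have "0 \<le> (\<Sum>j<n. \<Sum>i<n. sidle_charge y d p i j)"
    unfolding sidle_charge_def charge_form_sum using charge_form_nonneg[OF y d dy quad] .
  moreover have "(\<Sum>j<n. sidle_charge y d p j j) \<le> 2 * d * (\<Sum>j<n. 1 + p j)"
    unfolding sum_distrib_left using sidle_charge_diag_le[OF y] d p
    by (intro sum_mono) auto
  ultimately show ?thesis by linarith
qed

lemma sidle_cost_le_pair_lower_bound:
  fixes y d :: real
  assumes y: "0 < y" and d: "0 < d" and dy: "y < d * (2 + d)"
    and quad: "d\<^sup>2 + (1 + y - y\<^sup>2) * d + y - 2 = 0"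
    and p: "\<forall>j<n. 0 \<le> p j" and pos: "bij_betw pos {..<n} {..<n}"
    and rk: "long_order_ok y n p rk"
  shows "sidle_cost y n p pos rk \<le> (1 + d) * pair_lower_bound n p"
proof -
  have rk_bij: "bij_betw rk {..<n} {..<n}" using rk unfolding long_order_ok_def by blast
  define W where "W = (\<Sum>j<n. 1 + p j)"
  define M where "M = (\<Sum>j<n. \<Sum>i<n. if i \<noteq> j then 1 + min (p i) (p j) else 0)"
  define D where "D = (\<Sum>j<n. \<Sum>i<n. if i \<noteq> j then sidle_delay y p pos rk i j else 0)"
  define H where "H = (\<Sum>j<n. \<Sum>i<n. if i \<noteq> j then sidle_charge y d p i j else 0)"
  have cost: "sidle_cost y n p pos rk = W + D"
    unfolding sidle_cost_def W_def D_def
    by (simp add: sidle_C_eq_sum_delay[OF pos rk_bij] sum.distrib)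
  have "2 * D \<le> (\<Sum>j<n. \<Sum>i<n. if i \<noteq> j then (1 + d) * (1 + min (p i) (p j)) - sidle_charge y d p i j else 0)"
    unfolding D_def sum_offdiag_symmetrize
  proof (intro sum_mono)
    fix i j assume ij: "i \<in> {..<n}" "j \<in> {..<n}"
    then have "i \<noteq> j \<Longrightarrow> pos i \<noteq> pos j \<and> rk i \<noteq> rk j"
      using pos rk_bij by (auto simp: bij_betw_def inj_on_def)
    then show "(if i \<noteq> j then sidle_delay y p pos rk i j + sidle_delay y p pos rk j i else 0)
        \<le> (if i \<noteq> j then (1 + d) * (1 + min (p i) (p j)) - sidle_charge y d p i j else 0)"
      using sidle_delay_pair_le[of y d p i j pos rk] y d p ij rk
      unfolding long_order_ok_def by auto
  qed
  also have "\<dots> = (\<Sum>j<n. \<Sum>i<n. (1 + d) * (if i \<noteq> j then 1 + min (p i) (p j) else 0)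
                                 - (if i \<noteq> j then sidle_charge y d p i j else 0))"
    by (intro sum.cong) auto
  also have "\<dots> = (1 + d) * M - H"
    unfolding M_def H_def by (simp add: sum_subtractf sum_distrib_left)
  finally have "2 * D \<le> (1 + d) * M - H" .
  moreover have "0 \<le> H + 2 * d * W"
    unfolding H_def W_def using sidle_charge_offdiag_sum_ge[OF y d dy quad p] by simp
  ultimately have "2 * sidle_cost y n p pos rk \<le> 2 * W + (1 + d) * M + 2 * d * W"
    unfolding cost by (smt (verit))
  also have "\<dots> = 2 * ((1 + d) * (W + M / 2))" by (simp add: algebra_simps)
  finally show ?thesis unfolding pair_lower_bound_def W_def M_def by simp
qed

section \<open>The parameters y0 and rho\<close>

lemma sidle_cubic_decreasing:
  fixes x z :: real
  assumes "1 \<le> x" "x \<le> z" "z \<le> 2"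
  shows "2 * z ^ 3 - 9 * z ^ 2 + 10 * z - 2 \<le> 2 * x ^ 3 - 9 * x ^ 2 + 10 * x - 2"
proof -
  define q where "q = (2 - z) * ((2 * x - 1) * (x - 3)) + (z - 1) * (x * (2 * x - 5))
                       + 2 * ((z - 1) * (z - 2))"
  have diff: "(2 * z ^ 3 - 9 * z ^ 2 + 10 * z - 2) - (2 * x ^ 3 - 9 * x ^ 2 + 10 * x - 2) = (z - x) * q"
    unfolding q_def by (simp add: algebra_simps power2_eq_square power3_eq_cube)
  have "(2 - z) * ((2 * x - 1) * (x - 3)) \<le> 0"
    using assms by (intro mult_nonneg_nonpos mult_nonneg_nonpos) auto
  moreover have "(z - 1) * (x * (2 * x - 5)) \<le> 0"
    using assms by (intro mult_nonneg_nonpos mult_nonneg_nonpos) auto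
  moreover have "(z - 1) * (z - 2) \<le> 0"
    using assms by (intro mult_nonneg_nonpos) auto
  ultimately have "q \<le> 0" unfolding q_def by linarith
  then have "(z - x) * q \<le> 0" using assms by (intro mult_nonneg_nonpos) auto
  then show ?thesis using diff by linarith
qed

lemma sidle_root_bounds:
  fixes y :: real
  assumes "1 < y" "y < 2" and root: "2 * y ^ 3 - 9 * y ^ 2 + 10 * y - 2 = 0"
  shows "271/200 < y" "y < 2711/2000"
proof -
  show "271/200 < y"
  proof (rule ccontr)
    assume "\<not> 271/200 < y"
    then have "2 * (271/200) ^ 3 - 9 * (271/200) ^ 2 + 10 * (271/200) - 2 \<le> (0::real)"
      using sidle_cubic_decreasing[of y "271/200"] assms(1) root by simp
    then show False by (simp add: power2_eq_square power3_eq_cube)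
  qed
  show "y < 2711/2000"
  proof (rule ccontr)
    assume "\<not> y < 2711/2000"
    then have "0 \<le> 2 * (2711/2000) ^ 3 - 9 * (2711/2000) ^ 2 + 10 * (2711/2000) - (2::real)"
      using sidle_cubic_decreasing[of "2711/2000" y] assms(2) root by simp
    then show False by (simp add: power2_eq_square power3_eq_cube)
  qed
qed

lemma sidle_ratio_quadratic:
  fixes y :: real
  assumes "y \<le> 2"
  defines "\<rho> \<equiv> (1 - y + y ^ 2 + sqrt (9 - 2 * y - y ^ 2 - 2 * y ^ 3 + y ^ 4)) / 2"
  shows "(\<rho> - 1)\<^sup>2 + (1 + y - y\<^sup>2) * (\<rho> - 1) + y - 2 = 0" and "1/2 \<le> \<rho> - 1"
proof -
  define a where "a = 1 + y - y\<^sup>2"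
  define g where "g = 9 - 2 * y - y ^ 2 - 2 * y ^ 3 + y ^ 4"
  have g: "g = a\<^sup>2 + 8 - 4 * y"
    unfolding a_def g_def by (simp add: algebra_simps power2_eq_square power3_eq_cube power4_eq_xxxx)
  then have "0 \<le> g" using assms zero_le_power2[of a] by linarith
  then have sqrt_g: "(sqrt g)\<^sup>2 = g" by simp
  have \<rho>: "\<rho> - 1 = (sqrt g - a) / 2" unfolding \<rho>_def g_def a_def by (simp add: field_simps)
  have "(\<rho> - 1)\<^sup>2 + a * (\<rho> - 1) + y - 2 = ((sqrt g)\<^sup>2 - a\<^sup>2) / 4 + y - 2"
    unfolding \<rho> by (simp add: field_simps power2_eq_square)
  also have "\<dots> = (g - a\<^sup>2) / 4 + y - 2" by (simp only: sqrt_g)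
  also have "\<dots> = 0" unfolding g by (simp add: field_simps)
  finally show "(\<rho> - 1)\<^sup>2 + (1 + y - y\<^sup>2) * (\<rho> - 1) + y - 2 = 0" unfolding a_def .
  have "(a + 1)\<^sup>2 \<le> g"
  proof -
    have "0 \<le> 2 * (y - 3/2)\<^sup>2 + 1/2" by simp
    then show ?thesis unfolding g a_def by (simp add: power2_eq_square algebra_simps)
  qed
  then have "a + 1 \<le> sqrt g" using real_le_rsqrt by blast
  then show "1/2 \<le> \<rho> - 1" unfolding \<rho> by simp
qed

lemma sidle_ratio_bounds:
  fixes y d :: real
  assumes y: "271/200 < y" "y < 2711/2000" and d: "1/2 \<le> d"
    and quad: "d\<^sup>2 + (1 + y - y\<^sup>2) * d + y - 2 = 0"
  shows "d \<le> 117/200" and "y < d * (2 + d)"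
proof -
  define a where "a = 1 + y - y\<^sup>2"
  have y_sq: "y\<^sup>2 \<le> 5421/2000 * y - 734681/400000"
  proof -
    have "0 \<le> (y - 271/200) * (2711/2000 - y)" using y by simp
    moreover have "(y - 271/200) * (2711/2000 - y)
        = 5421/2000 * y - 734681/400000 - y\<^sup>2"
      by (simp add: field_simps power2_eq_square)
    ultimately show ?thesis by linarith
  qed
  have "y * y < 2711/2000 * (2711/2000)" using y by (intro mult_strict_mono) auto
  then have a: "1/2 < a" unfolding a_def using y by (simp add: power2_eq_square)
  \<comment> \<open>the left side of the quadratic increases in d and is already nonnegative at 117/200\<close>
  show "d \<le> 117/200"
  proof (rule ccontr)
    assume "\<not> d \<le> 117/200"
    then have "(117/200)\<^sup>2 < d\<^sup>2" and "a * (117/200) < a * d"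
      using a by (simp_all add: power_strict_mono)
    then have "(117/200)\<^sup>2 + a * (117/200) + y - 2 < 0"
      using quad unfolding a_def by linarith
    moreover have "(117/200)\<^sup>2 + a * (117/200) + y - 2
        = 317/200 * y - 117/200 * y\<^sup>2 - 42911/40000"
      unfolding a_def by (simp add: field_simps power2_eq_square)
    ultimately show False using y y_sq by linarith
  qed
  define b where "b = 1 - y + y\<^sup>2"
  have "y \<le> y\<^sup>2" using y by (simp add: power2_eq_square)
  then have "b / 2 \<le> b * d"
    unfolding b_def using mult_left_mono[OF d, of "1 - y + y\<^sup>2"] by simp
  moreover have "d * (2 + d) = 2 - y + b * d"
    using quad unfolding b_def by (simp add: algebra_simps power2_eq_square)
  moreover have "4 * y - 4 < b"
  proof -
    have "(y - 1) * (4 - y) < 711/2000 * (529/200)" using y by (intro mult_strict_mono) auto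
    then show ?thesis unfolding b_def by (simp add: algebra_simps power2_eq_square)
  qed
  ultimately show "y < d * (2 + d)" by linarith
qed

theorem theorem4:
  fixes y0 :: real
  assumes y0_int: "1 < y0" "y0 < 2"
    and y0_root: "2 * y0 ^ 3 - 9 * y0 ^ 2 + 10 * y0 - 2 = 0"
  defines "\<rho> \<equiv> (1 - y0 + y0 ^ 2 + sqrt (9 - 2 * y0 - y0 ^ 2 - 2 * y0 ^ 3 + y0 ^ 4)) / 2"
  shows "\<rho> \<le> 1.585 \<and>
    (\<forall>n p pos rk. (\<forall>j<n. 0 \<le> p j) \<longrightarrow> bij_betw pos {..<n} {..<n} \<longrightarrow>
        long_order_ok y0 n p rk \<longrightarrow> sidle_cost y0 n p pos rk \<le> \<rho> * OPT n p)"
proof -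
  note y0 = sidle_root_bounds[OF y0_int y0_root]
  note quad = sidle_ratio_quadratic[OF less_imp_le[OF y0_int(2)], folded \<rho>_def]
  note bounds = sidle_ratio_bounds[OF y0 quad(2,1)]
  have "0 < y0" and "0 < \<rho> - 1" using y0_int quad(2) by simp_all
  have "sidle_cost y0 n p pos rk \<le> \<rho> * OPT n p"
    if p: "\<forall>j<n. 0 \<le> p j" and "bij_betw pos {..<n} {..<n}" and "long_order_ok y0 n p rk"
    for n p pos rk
  proof -
    have "sidle_cost y0 n p pos rk \<le> \<rho> * pair_lower_bound n p"
      using sidle_cost_le_pair_lower_bound[OF \<open>0 < y0\<close> \<open>0 < \<rho> - 1\<close> bounds(2) quad(1) that] by simp
    also have "\<dots> \<le> \<rho> * OPT n p"
      using pair_lower_bound_le_OPT[OF p] \<open>0 < \<rho> - 1\<close> by simp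
    finally show ?thesis .
  qed
  moreover have "\<rho> \<le> 1.585" using bounds(1) by simp
  ultimately show ?thesis by blast
qed

end
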